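(* Let $(X,Y)$ be a random vector with density $f$ as in the context. Then the Pearson correlation is $\rho(X,Y)=\rho_1$, and the maximal correlation coefficient satisfies $R(X,Y)=\sup_{n\ge1}|\rho_n|$.
   Context: Let $f_1,f_2$ be probability densities (w.r.t. Lebesgue measure on $\mathbb{R}$) with bounded supports, $\mathrm{supp}(f_i)\subseteq[\alpha_i,\omega_i]$, $-\infty<\alpha_i<\omega_i<\infty$ ($i=1,2$). Let $\{\phi_n\}_{n\ge0}$ be the orthonormal polynomial system in $L_2(f_1(x)dx)$ with $\deg\phi_n=n$ and leading coefficient $p_n>0$, and $\{\psi_n\}_{n\ge0}$ the orthonormal polynomial system in $L_2(f_2(y)dy)$ with $\deg\psi_n=n$ and leading coefficient $q_n>0$. Let $c_n=\sup_{\alpha_1\le x\le\omega_1}|\phi_n(x)|$ and $d_n=\sup_{\alpha_2\le y\le\omega_2}|\psi_n(y)|$ for $n\ge1$. Let $\{\rho_n\}_{n\ge1}$ be a real sequence with $\sum_{n=1}^\infty|\rho_n|c_nd_n\le 1$. Define $f(x,y)=f_1(x)f_2(y)\bigl(1+\sum_{n=1}^\infty\rho_n\phi_n(x)\psi_n(y)\bigr)$ for $(x,y)\in[\alpha_1,\omega_1]\times[\alpha_2,\omega_2]$ and $f(x,y)=0$ otherwise; this is a bivariate probability density with marginals $f_1,f_2$. The Pearson correlation is $\rho(X,Y)=\mathrm{Cov}(X,Y)/\sqrt{\mathrm{Var}(X)\mathrm{Var}(Y)}$. For a non-degenerate random variable $W$, $L_2^*(W)$ denotes the class of measurable $g:\mathbb{R}\to\mathbb{R}$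 with $0<\mathrm{Var}[g(W)]<\infty$, and the maximal correlation is $R(X,Y)=\sup_{g_1\in L_2^*(X),\,g_2\in L_2^*(Y)}\rho(g_1(X),g_2(Y))$. *)

theory Defs
  imports "HOL-Probability.Probability" "HOL-Computational_Algebra.Polynomial"
begin

definition covar :: "'a measure \<Rightarrow> ('a \<Rightarrow> real) \<Rightarrow> ('a \<Rightarrow> real) \<Rightarrow> real" where
  "covar M U V = (\<integral>\<omega>. (U \<omega> - (\<integral>\<omega>'. U \<omega>' \<partial>M)) * (V \<omega> - (\<integral>\<omega>'. V \<omega>' \<partial>M)) \<partial>M)"

definition var :: "'a measure \<Rightarrow> ('a \<Rightarrow> real) \<Rightarrow> real" where
  "var M U = covar M U U"

definition pearson :: "'a measure \<Rightarrow> ('a \<Rightarrow> real) \<Rightarrow> ('a \<Rightarrow> real) \<Rightarrow> real" where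
  "pearson M U V = covar M U V / sqrt (var M U * var M V)"

definition L2star :: "'a measure \<Rightarrow> ('a \<Rightarrow> real) \<Rightarrow> (real \<Rightarrow> real) set" where
  "L2star M W = {g. g \<in> borel_measurable borel \<and> integrable M (\<lambda>\<omega>. (g (W \<omega>))\<^sup>2)
                     \<and> 0 < var M (\<lambda>\<omega>. g (W \<omega>))}"

definition maxcorr :: "'a measure \<Rightarrow> ('a \<Rightarrow> real) \<Rightarrow> ('a \<Rightarrow> real) \<Rightarrow> real" where
  "maxcorr M X Y = Sup {pearson M (\<lambda>\<omega>. g1 (X \<omega>)) (\<lambda>\<omega>. g2 (Y \<omega>)) | g1 g2.
                          g1 \<in> L2star M X \<and> g2 \<in> L2star M Y}"

definition bounded_support_density :: "(real \<Rightarrow> real) \<Rightarrow> real \<Rightarrow> real \<Rightarrow> bool" where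
  "bounded_support_density g a b \<longleftrightarrow>
     a < b \<and> g \<in> borel_measurable lborel \<and> (\<forall>x. 0 \<le> g x) \<and> integrable lborel g \<and>
     (\<integral>x. g x \<partial>lborel) = 1 \<and> (\<forall>x. x \<notin> {a..b} \<longrightarrow> g x = 0)"

definition orthonormal_poly_system :: "(real \<Rightarrow> real) \<Rightarrow> (nat \<Rightarrow> real poly) \<Rightarrow> bool" where
  "orthonormal_poly_system g P \<longleftrightarrow>
     (\<forall>n. degree (P n) = n \<and> lead_coeff (P n) > 0) \<and>
     (\<forall>m n. integrable lborel (\<lambda>x. poly (P m) x * poly (P n) x * g x) \<and>
            (\<integral>x. poly (P m) x * poly (P n) x * g x \<partial>lborel) = (if m = n then 1 else 0))"

definition sup_abs_on :: "real poly \<Rightarrow> real \<Rightarrow> real \<Rightarrow> real" where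
  "sup_abs_on p a b = Sup ((\<lambda>x. \<bar>poly p x\<bar>) ` {a..b})"

definition lancaster_density ::
  "(real \<Rightarrow> real) \<Rightarrow> (real \<Rightarrow> real) \<Rightarrow> real \<Rightarrow> real \<Rightarrow> real \<Rightarrow> real \<Rightarrow>
   (nat \<Rightarrow> real poly) \<Rightarrow> (nat \<Rightarrow> real poly) \<Rightarrow> (nat \<Rightarrow> real) \<Rightarrow> real \<Rightarrow> real \<Rightarrow> real" where
  "lancaster_density f1 f2 a1 b1 a2 b2 \<phi> \<psi> \<rho> x y =
     (if x \<in> {a1..b1} \<and> y \<in> {a2..b2}
      then f1 x * f2 y * (1 + (\<Sum>n. \<rho> (Suc n) * poly (\<phi> (Suc n)) x * poly (\<psi> (Suc n)) y))
      else 0)"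

end

theory Submission
  imports Defs
begin

(*
  The condition \<Sum> |\<rho>_n| c_n d_n \<le> 1 makes every partial sum of the series bounded by 1
  on the support, so all integrals against f may be computed term by term (dominated
  convergence).  This gives:
   (1) the marginals of f are f1 and f2 (each term integrates to 0, since \<phi>_0 = \<psi>_0 = 1);
   (2) for square-integrable g1, g2 the covariance expands as
          Cov(g1(X), g2(Y)) = \<Sum>n\<ge>1 \<rho>_n a_n b_n,
       a_n, b_n the Fourier coefficients of g1, g2 w.r.t. \<phi>_n, \<psi>_n.
  By Bessel's inequality \<Sum>n\<ge>1 a_n\<^sup>2 \<le> Var g1(X) and \<Sum>n\<ge>1 b_n\<^sup>2 \<le> Var g2(Y), hence by
  Cauchy-Schwarz every correlation \<rho>(g1(X), g2(Y)) is at most sup |\<rho>_n|; conversely the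
  pair (\<plusminus>\<phi>_n, \<psi>_n) has correlation \<plusminus>\<rho>_n.  Since \<phi>_1, \<psi>_1 are increasing affine
  maps, \<rho>(X,Y) = \<rho>(\<phi>_1(X), \<psi>_1(Y)) = \<rho>_1.
*)

lemma poly_borel_measurable [measurable]: "(\<lambda>x. poly (p::real poly) x) \<in> borel_measurable borel"
  by (intro borel_measurable_continuous_onI continuous_intros)

lemma abs_poly_le_sup_abs_on:
  assumes "x \<in> {a..b}" shows "\<bar>poly p x\<bar> \<le> sup_abs_on p a b"
proof -
  have "compact ((\<lambda>x. \<bar>poly p x\<bar>) ` {a..b})"
    by (intro compact_continuous_image continuous_intros) auto
  hence "bdd_above ((\<lambda>x. \<bar>poly p x\<bar>) ` {a..b})"
    by (simp add: bounded_imp_bdd_above compact_imp_bounded)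
  thus ?thesis unfolding sup_abs_on_def using assms by (intro cSup_upper) auto
qed

lemma integrable_tensor:
  fixes u v :: "real \<Rightarrow> real"
  assumes u: "integrable lborel u" and v: "integrable lborel v"
  shows "integrable (lborel \<Otimes>\<^sub>M lborel) (\<lambda>(x,y). u x * v y)"
proof (rule lborel_pair.Fubini_integrable)
  have [measurable]: "u \<in> borel_measurable lborel" "v \<in> borel_measurable lborel" using u v by auto
  show "(\<lambda>(x,y). u x * v y) \<in> borel_measurable (lborel \<Otimes>\<^sub>M lborel)" by measurable
  have "integrable lborel (\<lambda>x. \<bar>u x\<bar> * (\<integral>y. \<bar>v y\<bar> \<partial>lborel))"
    using u by (intro integrable_mult_left) auto
  thus "integrable lborel (\<lambda>x. \<integral>y. norm (case (x, y) of (x, y) \<Rightarrow> u x * v y) \<partial>lborel)"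
    by (simp add: abs_mult)
  show "AE x in lborel. integrable lborel (\<lambda>y. case (x, y) of (x, y) \<Rightarrow> u x * v y)"
    using v by auto
qed

lemma integral_tensor:
  fixes u v :: "real \<Rightarrow> real"
  assumes u: "integrable lborel u" and v: "integrable lborel v"
  shows "(\<integral>z. (case z of (x,y) \<Rightarrow> u x * v y) \<partial>(lborel \<Otimes>\<^sub>M lborel))
           = integral\<^sup>L lborel u * integral\<^sup>L lborel v"
  using lborel_pair.integral_fst[of "\<lambda>x y. u x * v y"] integrable_tensor[OF u v] by simp

lemma sums_integral_weighted_series:
  fixes w s :: "'a \<Rightarrow> real" and u :: "nat \<Rightarrow> 'a \<Rightarrow> real"
  assumes w: "integrable N w" and [measurable]: "s \<in> borel_measurable N" "\<And>n. u n \<in> borel_measurable N"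
    and conv: "\<And>z. z \<in> space N \<Longrightarrow> w z \<noteq> 0 \<Longrightarrow> (\<lambda>n. u n z) sums s z"
    and bnd: "\<And>z n. z \<in> space N \<Longrightarrow> w z \<noteq> 0 \<Longrightarrow> \<bar>\<Sum>k<n. u k z\<bar> \<le> B"
  shows "integrable N (\<lambda>z. w z * s z)" "(\<lambda>n. \<integral>z. w z * u n z \<partial>N) sums (\<integral>z. w z * s z \<partial>N)"
proof -
  have [measurable]: "w \<in> borel_measurable N" using w by auto
  define P where "P n z = w z * (\<Sum>k<n. u k z)" for n z
  have P_bound: "norm (P n z) \<le> B * \<bar>w z\<bar>" if "z \<in> space N" for n z
    using bnd[OF that, of n]
    by (cases "w z = 0") (auto simp: P_def abs_mult mult.commute intro: mult_left_mono)
  have P_lim: "AE z in N. (\<lambda>n. P n z) \<longlonglongrightarrow> w z * s z"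
  proof (rule AE_I2)
    fix z assume z: "z \<in> space N"
    show "(\<lambda>n. P n z) \<longlonglongrightarrow> w z * s z"
      using conv[OF z] unfolding P_def sums_def by (cases "w z = 0") (auto intro: tendsto_mult)
  qed
  have dom: "integrable N (\<lambda>z. B * \<bar>w z\<bar>)" using w by auto
  have meas: "(\<lambda>z. w z * s z) \<in> borel_measurable N" "\<And>n. P n \<in> borel_measurable N"
    unfolding P_def by measurable
  have P_dom: "\<And>n. AE z in N. norm (P n z) \<le> B * \<bar>w z\<bar>" by (rule AE_I2, rule P_bound)
  note DC = integrable_dominated_convergence[OF meas dom P_lim P_dom]
    integral_dominated_convergence[OF meas dom P_lim P_dom]
  show "integrable N (\<lambda>z. w z * s z)" by (rule DC(1))
  have u_int: "integrable N (\<lambda>z. w z * u n z)" for n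
  proof (rule Bochner_Integration.integrable_bound[of _ "\<lambda>z. 2 * B * \<bar>w z\<bar>"])
    show "integrable N (\<lambda>z. 2 * B * \<bar>w z\<bar>)" using w by auto
    show "AE z in N. norm (w z * u n z) \<le> norm (2 * B * \<bar>w z\<bar>)"
    proof (rule AE_I2)
      fix z assume z: "z \<in> space N"
      have "w z * u n z = P (Suc n) z - P n z" by (simp add: P_def algebra_simps)
      hence "norm (w z * u n z) \<le> norm (P (Suc n) z) + norm (P n z)" by (metis norm_triangle_ineq4)
      also have "\<dots> \<le> norm (2 * B * \<bar>w z\<bar>)" using P_bound[OF z, of n] P_bound[OF z, of "Suc n"] by simp
      finally show "norm (w z * u n z) \<le> norm (2 * B * \<bar>w z\<bar>)" .
    qed
  qed simp
  have "integral\<^sup>L N (P n) = (\<Sum>k<n. \<integral>z. w z * u k z \<partial>N)" for n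
    unfolding P_def sum_distrib_left by (rule Bochner_Integration.integral_sum) (rule u_int)
  thus "(\<lambda>n. \<integral>z. w z * u n z \<partial>N) sums (\<integral>z. w z * s z \<partial>N)"
    using DC(2) unfolding sums_def by simp
qed

lemma covar_eq_moments:
  assumes M: "prob_space M" and U: "integrable M U" and V: "integrable M V"
    and UV: "integrable M (\<lambda>w. U w * V w)"
  shows "covar M U V = (\<integral>w. U w * V w \<partial>M) - (\<integral>w. U w \<partial>M) * (\<integral>w. V w \<partial>M)"
proof -
  interpret prob_space M by fact
  let ?a = "\<integral>w. U w \<partial>M" and ?b = "\<integral>w. V w \<partial>M"
  have "covar M U V = (\<integral>w. U w * V w - ?b * U w - ?a * V w + ?a * ?b \<partial>M)"
    unfolding covar_def by (rule Bochner_Integration.integral_cong) (auto simp: algebra_simps)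
  also have "\<dots> = (\<integral>w. U w * V w \<partial>M) - ?b * ?a - ?a * ?b + ?a * ?b"
    using U V UV prob_space by (simp add: Bochner_Integration.integral_add Bochner_Integration.integral_diff)
  finally show ?thesis by (simp add: algebra_simps)
qed

lemma var_eq_moments:
  assumes M: "prob_space M" and U: "integrable M U" and UU: "integrable M (\<lambda>w. (U w)\<^sup>2)"
  shows "var M U = (\<integral>w. (U w)\<^sup>2 \<partial>M) - (\<integral>w. U w \<partial>M)\<^sup>2"
  using covar_eq_moments[OF M U U] UU unfolding var_def by (simp add: power2_eq_square)

lemma covar_affine:
  assumes M: "prob_space M" and U: "integrable M U" and V: "integrable M V"
  shows "covar M (\<lambda>w. a * U w + b) (\<lambda>w. c * V w + d) = a * c * covar M U V"
proof -
  interpret prob_space M by fact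
  have "(\<integral>w. a * U w + b \<partial>M) = a * (\<integral>w. U w \<partial>M) + b"
    and "(\<integral>w. c * V w + d \<partial>M) = c * (\<integral>w. V w \<partial>M) + d" using U V prob_space by simp_all
  hence "covar M (\<lambda>w. a * U w + b) (\<lambda>w. c * V w + d) =
     (\<integral>w. (a * c) * ((U w - (\<integral>w. U w \<partial>M)) * (V w - (\<integral>w. V w \<partial>M))) \<partial>M)"
    unfolding covar_def by (intro Bochner_Integration.integral_cong refl) (simp add: algebra_simps)
  also have "\<dots> = a * c * covar M U V" unfolding covar_def by (rule integral_mult_right_zero)
  finally show ?thesis .
qed

lemma pearson_affine:
  assumes M: "prob_space M" and U: "integrable M U" and V: "integrable M V"
    and a: "a > 0" and c: "c > 0"
  shows "pearson M (\<lambda>w. a * U w + b) (\<lambda>w. c * V w + d) = pearson M U V"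
proof -
  have "sqrt (a * a * var M U * (c * c * var M V)) = a * c * sqrt (var M U * var M V)"
    using a c by (simp add: real_sqrt_mult power2_eq_square[symmetric] mult_ac)
  thus ?thesis
    unfolding pearson_def var_def covar_affine[OF M U V] covar_affine[OF M U U] covar_affine[OF M V V]
    using a c by simp
qed

lemma integrable_product_of_squares:
  fixes U V :: "'a \<Rightarrow> real"
  assumes [measurable]: "U \<in> borel_measurable M" "V \<in> borel_measurable M"
    and U: "integrable M (\<lambda>w. (U w)\<^sup>2)" and V: "integrable M (\<lambda>w. (V w)\<^sup>2)"
  shows "integrable M (\<lambda>w. U w * V w)"
proof (rule Bochner_Integration.integrable_bound[OF Bochner_Integration.integrable_add[OF U V]])
  show "AE w in M. norm (U w * V w) \<le> norm ((U w)\<^sup>2 + (V w)\<^sup>2)"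
  proof (rule AE_I2)
    fix w
    have "0 \<le> (\<bar>U w\<bar> - \<bar>V w\<bar>)\<^sup>2" by simp
    hence "2 * (\<bar>U w\<bar> * \<bar>V w\<bar>) \<le> (U w)\<^sup>2 + (V w)\<^sup>2" by (simp add: power2_diff)
    moreover have "0 \<le> \<bar>U w\<bar> * \<bar>V w\<bar>" "0 \<le> (U w)\<^sup>2 + (V w)\<^sup>2" by simp_all
    ultimately have "\<bar>U w\<bar> * \<bar>V w\<bar> \<le> (U w)\<^sup>2 + (V w)\<^sup>2" by linarith
    thus "norm (U w * V w) \<le> norm ((U w)\<^sup>2 + (V w)\<^sup>2)" by (simp add: abs_mult)
  qed
qed simp

lemma series_cauchy_schwarz:
  fixes A B r :: "nat \<Rightarrow> real"
  assumes VA: "\<And>N. (\<Sum>n<N. (A n)\<^sup>2) \<le> VA" and VB: "\<And>N. (\<Sum>n<N. (B n)\<^sup>2) \<le> VB"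
    and pA: "VA > 0" and pB: "VB > 0" and r: "\<And>n. \<bar>r n\<bar> \<le> R"
  shows "(\<Sum>n. r n * A n * B n) \<le> R * sqrt (VA * VB)"
proof -
  define t where "t = sqrt (VB / VA)"
  have t_pos: "t > 0" and tt: "t * t = VB / VA" using pA pB by (simp_all add: t_def)
  have "t * VA = sqrt (VA * VB)"
  proof (rule real_sqrt_unique[symmetric])
    show "(t * VA)\<^sup>2 = VA * VB" using tt pA by (simp add: power2_eq_square field_simps)
  qed (use t_pos pA in simp)
  moreover have "VB / t = sqrt (VA * VB)"
  proof (rule real_sqrt_unique[symmetric])
    show "(VB / t)\<^sup>2 = VA * VB" using tt pB t_pos pA
      by (simp add: power2_eq_square divide_simps) (simp add: algebra_simps)
  qed (use t_pos pB in simp)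
  ultimately have t: "t > 0" "t * VA = sqrt (VA * VB)" "VB / t = sqrt (VA * VB)" using t_pos by simp_all
  let ?G = "\<lambda>n. (t * (A n)\<^sup>2 + (B n)\<^sup>2 / t) / 2"
  have AM_GM: "\<bar>A n * B n\<bar> \<le> ?G n" for n
  proof -
    have "0 \<le> (t * \<bar>A n\<bar> - \<bar>B n\<bar>)\<^sup>2 / t" using t by simp
    also have "\<dots> = t * (A n)\<^sup>2 - 2 * \<bar>A n * B n\<bar> + (B n)\<^sup>2 / t"
      using t by (simp add: power2_eq_square field_simps abs_mult)
    finally show ?thesis by simp
  qed
  have R0: "R \<ge> 0" using r[of 0] by simp
  have sA: "summable (\<lambda>n. (A n)\<^sup>2)" by (rule summableI_nonneg_bounded[where x=VA]) (simp, rule VA)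
  have sB: "summable (\<lambda>n. (B n)\<^sup>2)" by (rule summableI_nonneg_bounded[where x=VB]) (simp, rule VB)
  have sums_G: "?G sums ((t * (\<Sum>n. (A n)\<^sup>2) + (\<Sum>n. (B n)\<^sup>2) / t) / 2)"
    by (intro sums_divide sums_add sums_mult summable_sums sums_divide sA sB)
  hence sG: "summable (\<lambda>n. R * ?G n)" by (intro summable_mult sums_summable)
  have term_le: "norm (r n * A n * B n) \<le> R * ?G n" for n
    using AM_GM[of n] r[of n] R0 by (simp add: abs_mult mult.assoc mult_mono)
  have "(\<Sum>n. r n * A n * B n) \<le> (\<Sum>n. R * ?G n)"
  proof (rule suminf_le)
    show "r n * A n * B n \<le> R * ?G n" for n using term_le[of n] by (simp only: real_norm_def abs_le_iff)
  qed (rule summable_comparison_test'[OF sG term_le], rule sG)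
  also have "\<dots> = R * ((t * (\<Sum>n. (A n)\<^sup>2) + (\<Sum>n. (B n)\<^sup>2) / t) / 2)"
    by (rule sums_unique[OF sums_mult[OF sums_G], symmetric])
  also have "\<dots> \<le> R * ((t * VA + VB / t) / 2)"
    using R0 t suminf_le_const[OF sA VA] suminf_le_const[OF sB VB]
    by (intro mult_left_mono divide_right_mono add_mono) (auto intro: divide_right_mono)
  also have "\<dots> = R * sqrt (VA * VB)" using t by simp
  finally show ?thesis .
qed

section \<open>Densities with bounded support and orthonormal polynomials\<close>

lemma bounded_support_densityD:
  assumes "bounded_support_density g a b"
  shows "\<And>x. 0 \<le> g x" "integrable lborel g" "(\<integral>x. g x \<partial>lborel) = 1"
    "\<And>x. x \<notin> {a..b} \<Longrightarrow> g x = 0" "g \<in> borel_measurable borel" "a < b"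
  using assms unfolding bounded_support_density_def by auto

lemma integrable_of_square_integrable:
  fixes g h :: "real \<Rightarrow> real"
  assumes gi: "integrable lborel g" and g0: "\<And>x. g x \<ge> 0" and [measurable]: "h \<in> borel_measurable borel"
    and I2: "integrable lborel (\<lambda>x. g x * (h x)\<^sup>2)"
  shows "integrable lborel (\<lambda>x. g x * h x)"
proof (rule Bochner_Integration.integrable_bound[OF Bochner_Integration.integrable_add[OF I2 gi]])
  have [measurable]: "g \<in> borel_measurable borel" using gi by auto
  show "(\<lambda>x. g x * h x) \<in> borel_measurable lborel" by simp
  show "AE x in lborel. norm (g x * h x) \<le> norm (g x * (h x)\<^sup>2 + g x)"
  proof (rule AE_I2)
    fix x
    have "\<bar>h x\<bar> \<le> (h x)\<^sup>2 + 1"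
    proof (cases "\<bar>h x\<bar> \<le> 1")
      case False
      hence "1 * \<bar>h x\<bar> \<le> \<bar>h x\<bar> * \<bar>h x\<bar>" by (intro mult_right_mono) auto
      thus ?thesis by (simp add: power2_eq_square abs_mult_self_eq)
    qed (simp add: add_increasing)
    hence "g x * \<bar>h x\<bar> \<le> g x * ((h x)\<^sup>2 + 1)" using g0[of x] by (rule mult_left_mono)
    thus "norm (g x * h x) \<le> norm (g x * (h x)\<^sup>2 + g x)"
      using g0[of x] by (simp add: abs_mult algebra_simps)
  qed
qed

text \<open>Polynomials are bounded on the support, so multiplying by one preserves integrability.\<close>

lemma integrable_times_poly:
  assumes g: "bounded_support_density g a b" and [measurable]: "h \<in> borel_measurable borel"
    and I: "integrable lborel (\<lambda>x. g x * h x)"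
  shows "integrable lborel (\<lambda>x. g x * h x * poly p x)"
proof (rule Bochner_Integration.integrable_bound[of _ "\<lambda>x. sup_abs_on p a b * (g x * h x)"])
  note g_facts = bounded_support_densityD[OF g]
  have [measurable]: "g \<in> borel_measurable borel" by (rule g_facts)
  show "integrable lborel (\<lambda>x. sup_abs_on p a b * (g x * h x))" using I by simp
  show "(\<lambda>x. g x * h x * poly p x) \<in> borel_measurable lborel" by simp
  show "AE x in lborel. norm (g x * h x * poly p x) \<le> norm (sup_abs_on p a b * (g x * h x))"
  proof (rule AE_I2)
    fix x
    show "norm (g x * h x * poly p x) \<le> norm (sup_abs_on p a b * (g x * h x))"
    proof (cases "x \<in> {a..b}")
      case True
      have "\<bar>g x * h x\<bar> * \<bar>poly p x\<bar> \<le> \<bar>g x * h x\<bar> * \<bar>sup_abs_on p a b\<bar>"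
        using abs_poly_le_sup_abs_on[OF True, of p] by (intro mult_left_mono) auto
      thus ?thesis by (simp add: abs_mult mult_ac)
    qed (simp add: g_facts)
  qed
qed

lemma density_expectation:
  assumes D: "distributed M lborel W (\<lambda>x. ennreal (g x))" and g: "bounded_support_density g a b"
    and [measurable]: "h \<in> borel_measurable borel"
  shows "integrable M (\<lambda>\<omega>. h (W \<omega>)) \<longleftrightarrow> integrable lborel (\<lambda>x. g x * h x)"
    "(\<integral>\<omega>. h (W \<omega>) \<partial>M) = (\<integral>x. g x * h x \<partial>lborel)"
  using distributed_integrable[OF D, of h] distributed_integral[OF D, of h]
    bounded_support_densityD(1)[OF g] by simp_all

lemma density_second_moments:
  assumes M: "prob_space M" and D: "distributed M lborel W (\<lambda>x. ennreal (g x))"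
    and g: "bounded_support_density g a b"
    and [measurable]: "h \<in> borel_measurable borel" and I: "integrable M (\<lambda>\<omega>. (h (W \<omega>))\<^sup>2)"
  shows "integrable lborel (\<lambda>x. g x * (h x)\<^sup>2)" "integrable lborel (\<lambda>x. g x * h x)"
    "integrable M (\<lambda>\<omega>. h (W \<omega>))"
    "var M (\<lambda>\<omega>. h (W \<omega>)) = (\<integral>x. g x * (h x)\<^sup>2 \<partial>lborel) - (\<integral>x. g x * h x \<partial>lborel)\<^sup>2"
proof -
  note E = density_expectation[OF D g]
  show I2: "integrable lborel (\<lambda>x. g x * (h x)\<^sup>2)" using E(1)[of "\<lambda>x. (h x)\<^sup>2"] I by simp
  show I1: "integrable lborel (\<lambda>x. g x * h x)"
    using bounded_support_densityD[OF g] by (intro integrable_of_square_integrable[OF _ _ _ I2]) simp_all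
  show "integrable M (\<lambda>\<omega>. h (W \<omega>))" using E(1)[of h] I1 by simp
  thus "var M (\<lambda>\<omega>. h (W \<omega>)) = (\<integral>x. g x * (h x)\<^sup>2 \<partial>lborel) - (\<integral>x. g x * h x \<partial>lborel)\<^sup>2"
    using var_eq_moments[OF M _ I] E(2)[of h] E(2)[of "\<lambda>x. (h x)\<^sup>2"] by simp
qed

definition fourier_coeff :: "(real \<Rightarrow> real) \<Rightarrow> real poly \<Rightarrow> (real \<Rightarrow> real) \<Rightarrow> real" where
  "fourier_coeff g p h = (\<integral>x. g x * h x * poly p x \<partial>lborel)"

lemma orthonormal_poly_systemD:
  assumes "orthonormal_poly_system g P"
  shows "degree (P n) = n" "lead_coeff (P n) > 0"
    "integrable lborel (\<lambda>x. poly (P m) x * poly (P n) x * g x)"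
    "(\<integral>x. poly (P m) x * poly (P n) x * g x \<partial>lborel) = (if m = n then 1 else 0)"
  using assms unfolding orthonormal_poly_system_def by blast+

lemma fourier_coeff_of_member:
  assumes "orthonormal_poly_system g P"
  shows "fourier_coeff g (P n) (\<lambda>x. poly (P m) x) = (if m = n then 1 else 0)"
  using orthonormal_poly_systemD(4)[OF assms, of m n] unfolding fourier_coeff_def
  by (simp add: mult_ac)

lemma orthonormal_poly_zero:
  assumes g: "bounded_support_density g a b" and P: "orthonormal_poly_system g P"
  shows "poly (P 0) x = 1"
proof -
  define k where "k = coeff (P 0) 0"
  have P0: "P 0 = [:k:]" using degree_0_id[OF orthonormal_poly_systemD(1)[OF P, of 0]] by (simp add: k_def)
  have k: "k > 0" using orthonormal_poly_systemD(2)[OF P, of 0] by (simp add: P0)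
  have "k * k * (\<integral>x. g x \<partial>lborel) = 1" using orthonormal_poly_systemD(4)[OF P, of 0 0] by (simp add: P0)
  hence "k * k = 1" using bounded_support_densityD(3)[OF g] by simp
  hence "(k - 1) * (k + 1) = 0" by (simp add: algebra_simps)
  hence "k = 1" using k by simp
  thus ?thesis by (simp add: P0)
qed

lemma orthonormal_poly_mean_zero:
  assumes g: "bounded_support_density g a b" and P: "orthonormal_poly_system g P" and n: "n \<noteq> 0"
  shows "(\<integral>x. g x * poly (P n) x \<partial>lborel) = 0"
  using orthonormal_poly_systemD(4)[OF P, of n 0] n orthonormal_poly_zero[OF g P]
  by (simp add: mult.commute)

text \<open>\<open>\<integral> P\<^sub>n\<^sup>2 g = 1\<close> forces \<open>sup |P\<^sub>n| \<ge> 1\<close> on the support; in particular \<open>c_n, d_n \<ge> 1\<close>.\<close>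

lemma orthonormal_poly_sup_ge_1:
  assumes g: "bounded_support_density g a b" and P: "orthonormal_poly_system g P"
  shows "sup_abs_on (P n) a b \<ge> 1"
proof -
  let ?c = "sup_abs_on (P n) a b"
  note g_facts = bounded_support_densityD[OF g]
  note PP = orthonormal_poly_systemD(3,4)[OF P, of n n]
  have "1 = (\<integral>x. poly (P n) x * poly (P n) x * g x \<partial>lborel)" using PP by simp
  also have "\<dots> \<le> (\<integral>x. ?c\<^sup>2 * g x \<partial>lborel)"
  proof (rule integral_mono[OF PP(1)])
    show "integrable lborel (\<lambda>x. ?c\<^sup>2 * g x)" using g_facts by simp
    fix x
    show "poly (P n) x * poly (P n) x * g x \<le> ?c\<^sup>2 * g x"
    proof (cases "x \<in> {a..b}")
      case True
      have "\<bar>poly (P n) x\<bar> * \<bar>poly (P n) x\<bar> \<le> ?c * ?c"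
        using abs_poly_le_sup_abs_on[OF True, of "P n"] by (intro mult_mono) auto
      thus ?thesis using g_facts(1)[of x] by (intro mult_right_mono) (auto simp: power2_eq_square)
    qed (simp add: g_facts)
  qed
  also have "\<dots> = ?c\<^sup>2" using g_facts by simp
  finally have "1 \<le> ?c\<^sup>2" .
  moreover have "?c \<ge> 0"
    using abs_poly_le_sup_abs_on[of a a b "P n"] g_facts(6) by simp
  ultimately show ?thesis by (metis abs_of_nonneg real_sqrt_abs real_sqrt_le_mono real_sqrt_one)
qed

lemma bessel_inequality:
  assumes g: "bounded_support_density g a b" and P: "orthonormal_poly_system g P"
    and [measurable]: "h \<in> borel_measurable borel" and I2: "integrable lborel (\<lambda>x. g x * (h x)\<^sup>2)"
    and fin: "finite J"
  shows "(\<Sum>n\<in>J. (fourier_coeff g (P n) h)\<^sup>2) \<le> (\<integral>x. g x * (h x)\<^sup>2 \<partial>lborel)"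
proof -
  note g_facts = bounded_support_densityD[OF g]
  have [measurable]: "g \<in> borel_measurable borel" by (rule g_facts)
  have I1: "integrable lborel (\<lambda>x. g x * h x)"
    by (rule integrable_of_square_integrable[OF g_facts(2,1) _ I2]) simp
  define c where "c n = fourier_coeff g (P n) h" for n
  define q where "q x = (\<Sum>n\<in>J. c n * poly (P n) x)" for x
  have IP: "integrable lborel (\<lambda>x. g x * h x * poly (P n) x)" for n
    by (rule integrable_times_poly[OF g _ I1]) simp
  note IPP = orthonormal_poly_systemD(3,4)[OF P]
  have expand: "g x * (h x - q x)\<^sup>2 = g x * (h x)\<^sup>2 - 2 * (\<Sum>n\<in>J. c n * (g x * h x * poly (P n) x))
      + (\<Sum>m\<in>J. \<Sum>n\<in>J. c m * c n * (poly (P m) x * poly (P n) x * g x))" for x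
  proof -
    have "g x * (h x * q x) = (\<Sum>n\<in>J. c n * (g x * h x * poly (P n) x))"
      unfolding q_def sum_distrib_left by (simp add: mult_ac)
    moreover have "(q x)\<^sup>2 = (\<Sum>m\<in>J. \<Sum>n\<in>J. c m * poly (P m) x * (c n * poly (P n) x))"
      unfolding q_def power2_eq_square sum_product by simp
    hence "g x * (q x)\<^sup>2 = (\<Sum>m\<in>J. \<Sum>n\<in>J. c m * c n * (poly (P m) x * poly (P n) x * g x))"
      by (simp add: sum_distrib_left mult_ac)
    moreover have "g x * (h x - q x)\<^sup>2 = g x * (h x)\<^sup>2 - 2 * (g x * (h x * q x)) + g x * (q x)\<^sup>2"
      by (simp add: power2_diff algebra_simps)
    ultimately show ?thesis by simp
  qed
  have "0 \<le> (\<integral>x. g x * (h x - q x)\<^sup>2 \<partial>lborel)"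
    by (rule Bochner_Integration.integral_nonneg) (simp add: g_facts)
  also have "\<dots> = (\<integral>x. g x * (h x)\<^sup>2 \<partial>lborel) - 2 * (\<Sum>n\<in>J. c n * c n)
      + (\<Sum>m\<in>J. \<Sum>n\<in>J. c m * c n * (if m = n then 1 else 0))"
    unfolding expand using I2 IP IPP
    by (simp add: Bochner_Integration.integral_sum Bochner_Integration.integrable_sum
        Bochner_Integration.integral_add Bochner_Integration.integral_diff c_def fourier_coeff_def)
  also have "(\<Sum>m\<in>J. \<Sum>n\<in>J. c m * c n * (if m = n then 1 else 0)) = (\<Sum>n\<in>J. c n * c n)"
    using fin by (simp add: if_distrib cong: if_cong)
  finally show ?thesis unfolding c_def by (simp add: power2_eq_square)
qed

text \<open>Dropping the coefficient along \<open>P\<^sub>0 = 1\<close> (which is the mean), Bessel's inequality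
  bounds the remaining coefficients by the variance.\<close>

lemma bessel_variance:
  assumes M: "prob_space M" and D: "distributed M lborel W (\<lambda>x. ennreal (g x))"
    and g: "bounded_support_density g a b" and P: "orthonormal_poly_system g P"
    and [measurable]: "h \<in> borel_measurable borel" and I: "integrable M (\<lambda>\<omega>. (h (W \<omega>))\<^sup>2)"
  shows "(\<Sum>n<N. (fourier_coeff g (P (Suc n)) h)\<^sup>2) \<le> var M (\<lambda>\<omega>. h (W \<omega>))"
proof -
  note moments = density_second_moments[OF M D g assms(5) I]
  have "(\<Sum>n<Suc N. (fourier_coeff g (P n) h)\<^sup>2) \<le> (\<integral>x. g x * (h x)\<^sup>2 \<partial>lborel)"
    by (rule bessel_inequality[OF g P _ moments(1)]) simp_all
  moreover have "fourier_coeff g (P 0) h = (\<integral>x. g x * h x \<partial>lborel)"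
    unfolding fourier_coeff_def orthonormal_poly_zero[OF g P] by simp
  ultimately show ?thesis unfolding moments(4) sum.lessThan_Suc_shift by simp
qed

lemma orthonormal_poly_standardized:
  assumes M: "prob_space M" and D: "distributed M lborel W (\<lambda>x. ennreal (g x))"
    and g: "bounded_support_density g a b" and P: "orthonormal_poly_system g P" and m: "m \<noteq> 0"
  shows "integrable M (\<lambda>\<omega>. (poly (P m) (W \<omega>))\<^sup>2)" "integrable M (\<lambda>\<omega>. poly (P m) (W \<omega>))"
    "var M (\<lambda>\<omega>. poly (P m) (W \<omega>)) = 1"
proof -
  have sq: "(\<lambda>x. g x * (poly (P m) x)\<^sup>2) = (\<lambda>x. poly (P m) x * poly (P m) x * g x)"
    by (auto simp: power2_eq_square mult_ac)
  show I: "integrable M (\<lambda>\<omega>. (poly (P m) (W \<omega>))\<^sup>2)"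
    using density_expectation(1)[OF D g, of "\<lambda>x. (poly (P m) x)\<^sup>2"] orthonormal_poly_systemD(3)[OF P]
    unfolding sq by simp
  note moments = density_second_moments[OF M D g poly_borel_measurable I]
  show "integrable M (\<lambda>\<omega>. poly (P m) (W \<omega>))" using moments(3) by simp
  show "var M (\<lambda>\<omega>. poly (P m) (W \<omega>)) = 1"
    using moments(4) orthonormal_poly_mean_zero[OF g P m] orthonormal_poly_systemD(4)[OF P, of m m]
    unfolding sq by simp
qed

lemma integral_orthogonal_series:
  assumes g: "bounded_support_density g a b" and P: "orthonormal_poly_system g P"
    and [measurable]: "s \<in> borel_measurable lborel"
    and conv: "\<And>z. z \<in> {a..b} \<Longrightarrow> (\<lambda>n. c n * poly (P (Suc n)) z) sums s z"
    and bnd: "\<And>z n. z \<in> {a..b} \<Longrightarrow> \<bar>\<Sum>k<n. c k * poly (P (Suc k)) z\<bar> \<le> B"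
  shows "integrable lborel (\<lambda>z. g z * s z)" "(\<integral>z. g z * s z \<partial>lborel) = 0"
proof -
  note g_facts = bounded_support_densityD[OF g]
  have support: "z \<in> {a..b}" if "g z \<noteq> 0" for z using that g_facts(4) by blast
  note DC = sums_integral_weighted_series[where u="\<lambda>n z. c n * poly (P (Suc n)) z",
      OF g_facts(2) _ _ conv[OF support] bnd[OF support]]
  show "integrable lborel (\<lambda>z. g z * s z)" by (rule DC(1)) simp_all
  have "(\<integral>z. g z * (c n * poly (P (Suc n)) z) \<partial>lborel) = 0" for n
    using orthonormal_poly_mean_zero[OF g P, of "Suc n"] by (simp add: mult.left_commute)
  hence "(\<lambda>n. 0) sums (\<integral>z. g z * s z \<partial>lborel)" using DC(2) by simp
  thus "(\<integral>z. g z * s z \<partial>lborel) = 0" using sums_zero sums_unique2 by blast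
qed

lemma degree_one_poly_affine:
  fixes p :: "real poly"
  assumes "degree p = 1"
  shows "poly p x = coeff p 0 + coeff p 1 * x"
  unfolding poly_altdef[of p x] assms by (simp add: atMost_Suc)

section \<open>The Lancaster density\<close>

locale lancaster_model =
  fixes f1 f2 :: "real \<Rightarrow> real" and a1 b1 a2 b2 :: real
    and phi psi :: "nat \<Rightarrow> real poly" and rho :: "nat \<Rightarrow> real"
    and M :: "'a measure" and X Y :: "'a \<Rightarrow> real"
  assumes f1: "bounded_support_density f1 a1 b1"
    and f2: "bounded_support_density f2 a2 b2"
    and phi: "orthonormal_poly_system f1 phi"
    and psi: "orthonormal_poly_system f2 psi"
    and summ: "summable (\<lambda>n. \<bar>rho (Suc n)\<bar> * sup_abs_on (phi (Suc n)) a1 b1 * sup_abs_on (psi (Suc n)) a2 b2)"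
    and sum_le: "(\<Sum>n. \<bar>rho (Suc n)\<bar> * sup_abs_on (phi (Suc n)) a1 b1 * sup_abs_on (psi (Suc n)) a2 b2) \<le> 1"
    and M: "prob_space M"
    and XY: "distributed M (lborel \<Otimes>\<^sub>M lborel) (\<lambda>\<omega>. (X \<omega>, Y \<omega>))
               (\<lambda>(x, y). ennreal (lancaster_density f1 f2 a1 b1 a2 b2 phi psi rho x y))"
begin

abbreviation "F \<equiv> lancaster_density f1 f2 a1 b1 a2 b2 phi psi rho"

definition series_term :: "nat \<Rightarrow> real \<Rightarrow> real \<Rightarrow> real" where
  "series_term n x y = rho (Suc n) * poly (phi (Suc n)) x * poly (psi (Suc n)) y"

definition series :: "real \<Rightarrow> real \<Rightarrow> real" where
  "series x y = (\<Sum>n. series_term n x y)"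

definition term_bound :: "nat \<Rightarrow> real" where
  "term_bound n = \<bar>rho (Suc n)\<bar> * sup_abs_on (phi (Suc n)) a1 b1 * sup_abs_on (psi (Suc n)) a2 b2"

lemmas f1_facts = bounded_support_densityD[OF f1]
lemmas f2_facts = bounded_support_densityD[OF f2]

lemma f1_meas [measurable]: "f1 \<in> borel_measurable borel" by (rule f1_facts)
lemma f2_meas [measurable]: "f2 \<in> borel_measurable borel" by (rule f2_facts)

lemma term_meas [measurable]: "(\<lambda>(x,y). series_term n x y) \<in> borel_measurable (lborel \<Otimes>\<^sub>M lborel)"
  unfolding series_term_def by measurable

lemma series_meas [measurable]: "(\<lambda>(x,y). series x y) \<in> borel_measurable (lborel \<Otimes>\<^sub>M lborel)"
  unfolding series_def by measurable

lemma term_le: assumes "x \<in> {a1..b1}" "y \<in> {a2..b2}" shows "\<bar>series_term n x y\<bar> \<le> term_bound n"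
  unfolding series_term_def term_bound_def abs_mult
  using abs_poly_le_sup_abs_on[OF assms(1), of "phi (Suc n)"] abs_poly_le_sup_abs_on[OF assms(2), of "psi (Suc n)"]
  by (intro mult_mono) auto

lemma term_bound_nonneg: "term_bound n \<ge> 0"
  using orthonormal_poly_sup_ge_1[OF f1 phi] orthonormal_poly_sup_ge_1[OF f2 psi]
  unfolding term_bound_def by (intro mult_nonneg_nonneg) (auto intro: order.trans[OF zero_le_one])

lemma partial_term_bound_le_1: "(\<Sum>k<n. term_bound k) \<le> 1"
  using sum_le_suminf[OF summ, of "{..<n}"] term_bound_nonneg sum_le unfolding term_bound_def by fastforce

lemma term_sums: assumes "x \<in> {a1..b1}" "y \<in> {a2..b2}" shows "(\<lambda>n. series_term n x y) sums series x y"
  unfolding series_def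
  by (rule summable_sums, rule summable_comparison_test'[OF summ[folded term_bound_def]])
     (use term_le[OF assms] in auto)

lemma partial_series_bound:
  assumes "x \<in> {a1..b1}" "y \<in> {a2..b2}" shows "\<bar>\<Sum>k<n. series_term k x y\<bar> \<le> 1"
proof -
  have "\<bar>\<Sum>k<n. series_term k x y\<bar> \<le> (\<Sum>k<n. term_bound k)"
    by (rule order.trans[OF sum_abs sum_mono]) (rule term_le[OF assms])
  thus ?thesis using partial_term_bound_le_1[of n] by linarith
qed

lemma series_bound: assumes "x \<in> {a1..b1}" "y \<in> {a2..b2}" shows "\<bar>series x y\<bar> \<le> 1"
proof -
  have "(\<lambda>n. \<bar>\<Sum>k<n. series_term k x y\<bar>) \<longlonglongrightarrow> \<bar>series x y\<bar>"
    using term_sums[OF assms] unfolding sums_def by (intro tendsto_rabs)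
  thus ?thesis by (rule LIMSEQ_le_const2) (use partial_series_bound[OF assms] in auto)
qed

lemma F_eq: "F x y = f1 x * f2 y * (1 + series x y)"
  unfolding lancaster_density_def series_def series_term_def using f1_facts(4) f2_facts(4) by auto

lemma F_nonneg: "F x y \<ge> 0"
proof (cases "x \<in> {a1..b1} \<and> y \<in> {a2..b2}")
  case True
  thus ?thesis unfolding F_eq using series_bound[of x y] f1_facts(1)[of x] f2_facts(1)[of y]
    by (intro mult_nonneg_nonneg) auto
qed (auto simp: lancaster_density_def)

lemma marginal_X: "(\<integral>\<^sup>+y. ennreal (F x y) \<partial>lborel) = ennreal (f1 x)"
proof (cases "x \<in> {a1..b1}")
  case False
  hence "\<And>y. F x y = 0" "f1 x = 0" unfolding lancaster_density_def using f1_facts(4) by auto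
  thus ?thesis by simp
next
  case True
  have [measurable]: "series x \<in> borel_measurable lborel" unfolding series_def series_term_def by measurable
  note I = integral_orthogonal_series[OF f2 psi _ _ partial_series_bound[OF True, unfolded series_term_def]]
  note I = I[OF _ term_sums[OF True, unfolded series_term_def]]
  have eq: "(\<lambda>y. F x y) = (\<lambda>y. f1 x * (f2 y + f2 y * series x y))"
    unfolding F_eq by (auto simp: algebra_simps)
  have "integrable lborel (\<lambda>y. F x y)" "(\<integral>y. F x y \<partial>lborel) = f1 x"
    unfolding eq using I f2_facts(2,3) by simp_all
  thus ?thesis by (simp add: nn_integral_eq_integral F_nonneg)
qed

lemma marginal_Y: "(\<integral>\<^sup>+x. ennreal (F x y) \<partial>lborel) = ennreal (f2 y)"
proof (cases "y \<in> {a2..b2}")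
  case False
  hence "\<And>x. F x y = 0" "f2 y = 0" unfolding lancaster_density_def using f2_facts(4) by auto
  thus ?thesis by simp
next
  case True
  have [measurable]: "(\<lambda>x. series x y) \<in> borel_measurable lborel" unfolding series_def series_term_def by measurable
  have swap: "series_term n x y = rho (Suc n) * poly (psi (Suc n)) y * poly (phi (Suc n)) x" for n x
    unfolding series_term_def by (simp add: mult_ac)
  note I = integral_orthogonal_series[OF f1 phi _ _ partial_series_bound[OF _ True, unfolded swap]]
  note I = I[OF _ term_sums[OF _ True, unfolded swap]]
  have eq: "(\<lambda>x. F x y) = (\<lambda>x. f2 y * (f1 x + f1 x * series x y))"
    unfolding F_eq by (auto simp: algebra_simps)
  have "integrable lborel (\<lambda>x. F x y)" "(\<integral>x. F x y \<partial>lborel) = f2 y"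
    unfolding eq using I f1_facts(2,3) by simp_all
  thus ?thesis by (simp add: nn_integral_eq_integral F_nonneg)
qed

lemma X_distributed: "distributed M lborel X (\<lambda>x. ennreal (f1 x))"
  using prob_space.distr_marginal1[OF M _ _ XY] marginal_X
  by (simp add: lborel.sigma_finite_measure_axioms)

lemma Y_distributed: "distributed M lborel Y (\<lambda>y. ennreal (f2 y))"
  using prob_space.distr_marginal2[OF M _ _ XY] marginal_Y
  by (simp add: lborel.sigma_finite_measure_axioms)

lemma mixed_moment_series:
  assumes [measurable]: "g1 \<in> borel_measurable borel" "g2 \<in> borel_measurable borel"
    and I1: "integrable lborel (\<lambda>x. f1 x * g1 x)" and I2: "integrable lborel (\<lambda>y. f2 y * g2 y)"
  shows "(\<lambda>n. rho (Suc n) * fourier_coeff f1 (phi (Suc n)) g1 * fourier_coeff f2 (psi (Suc n)) g2)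
         sums ((\<integral>\<omega>. g1 (X \<omega>) * g2 (Y \<omega>) \<partial>M) - (\<integral>x. f1 x * g1 x \<partial>lborel) * (\<integral>y. f2 y * g2 y \<partial>lborel))"
proof -
  let ?P = "lborel \<Otimes>\<^sub>M lborel"
  define w where "w = (\<lambda>(x,y). (f1 x * g1 x) * (f2 y * g2 y))"
  have w_int: "integrable ?P w" unfolding w_def by (rule integrable_tensor[OF I1 I2])
  have w_integral: "integral\<^sup>L ?P w = (\<integral>x. f1 x * g1 x \<partial>lborel) * (\<integral>y. f2 y * g2 y \<partial>lborel)"
    unfolding w_def by (rule integral_tensor[OF I1 I2])
  have support: "x \<in> {a1..b1}" "y \<in> {a2..b2}" if "w (x, y) \<noteq> 0" for x y
    using that f1_facts(4) f2_facts(4) unfolding w_def by auto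
  have conv: "(\<lambda>n. (\<lambda>(x,y). series_term n x y) z) sums (\<lambda>(x,y). series x y) z" if "w z \<noteq> 0" for z
    using that term_sums support by (cases z) simp
  have bnd: "\<bar>\<Sum>k<n. (\<lambda>(x,y). series_term k x y) z\<bar> \<le> 1" if "w z \<noteq> 0" for z n
    using that partial_series_bound support by (cases z) simp
  note DC = sums_integral_weighted_series[OF w_int series_meas term_meas conv bnd]
  have term_integral: "(\<integral>z. w z * (\<lambda>(x,y). series_term n x y) z \<partial>?P)
      = rho (Suc n) * fourier_coeff f1 (phi (Suc n)) g1 * fourier_coeff f2 (psi (Suc n)) g2" for n
  proof -
    have "(\<lambda>z. w z * (\<lambda>(x,y). series_term n x y) z) = (\<lambda>z. rho (Suc n) *
        (case z of (x,y) \<Rightarrow> (f1 x * g1 x * poly (phi (Suc n)) x) * (f2 y * g2 y * poly (psi (Suc n)) y)))"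
      unfolding w_def series_term_def by (auto simp: mult_ac)
    thus ?thesis
      using integral_tensor[OF integrable_times_poly[OF f1 _ I1] integrable_times_poly[OF f2 _ I2]]
      by (simp add: fourier_coeff_def)
  qed
  have "distributed M ?P (\<lambda>\<omega>. (X \<omega>, Y \<omega>)) (\<lambda>z. ennreal (case_prod F z))"
    using XY by (simp add: case_prod_beta')
  hence "(\<integral>\<omega>. g1 (X \<omega>) * g2 (Y \<omega>) \<partial>M) = (\<integral>z. case_prod F z * (case z of (x,y) \<Rightarrow> g1 x * g2 y) \<partial>?P)"
    using distributed_integral[of M ?P _ _ "\<lambda>(x,y). g1 x * g2 y"] by (simp add: F_nonneg split_beta')
  also have "(\<lambda>z. case_prod F z * (case z of (x,y) \<Rightarrow> g1 x * g2 y)) = (\<lambda>z. w z + w z * (\<lambda>(x,y). series x y) z)"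
    unfolding w_def F_eq by (auto simp: algebra_simps)
  finally have "(\<integral>\<omega>. g1 (X \<omega>) * g2 (Y \<omega>) \<partial>M) = integral\<^sup>L ?P w + (\<integral>z. w z * (\<lambda>(x,y). series x y) z \<partial>?P)"
    using w_int DC(1) by simp
  thus ?thesis using DC(2) unfolding term_integral w_integral by simp
qed

lemma covariance_series:
  assumes [measurable]: "g1 \<in> borel_measurable borel" "g2 \<in> borel_measurable borel"
    and I1: "integrable M (\<lambda>\<omega>. (g1 (X \<omega>))\<^sup>2)" and I2: "integrable M (\<lambda>\<omega>. (g2 (Y \<omega>))\<^sup>2)"
  shows "(\<lambda>n. rho (Suc n) * fourier_coeff f1 (phi (Suc n)) g1 * fourier_coeff f2 (psi (Suc n)) g2)
         sums covar M (\<lambda>\<omega>. g1 (X \<omega>)) (\<lambda>\<omega>. g2 (Y \<omega>))"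
proof -
  have [measurable]: "X \<in> borel_measurable M" "Y \<in> borel_measurable M"
    using X_distributed Y_distributed unfolding distributed_def by simp_all
  note mX = density_second_moments[OF M X_distributed f1 _ I1]
  note mY = density_second_moments[OF M Y_distributed f2 _ I2]
  have "covar M (\<lambda>\<omega>. g1 (X \<omega>)) (\<lambda>\<omega>. g2 (Y \<omega>)) = (\<integral>\<omega>. g1 (X \<omega>) * g2 (Y \<omega>) \<partial>M)
       - (\<integral>x. f1 x * g1 x \<partial>lborel) * (\<integral>y. f2 y * g2 y \<partial>lborel)"
    using covar_eq_moments[OF M mX(3) mY(3) integrable_product_of_squares[OF _ _ I1 I2]]
      density_expectation(2)[OF X_distributed f1, of g1] density_expectation(2)[OF Y_distributed f2, of g2]
    by simp
  thus ?thesis using mixed_moment_series mX(2) mY(2) by simp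
qed

text \<open>Upper bound: by Bessel and Cauchy-Schwarz no correlation exceeds a bound on the \<open>|\<rho>_n|\<close>.\<close>

lemma pearson_le:
  assumes g1: "g1 \<in> L2star M X" and g2: "g2 \<in> L2star M Y" and R: "\<And>n. \<bar>rho (Suc n)\<bar> \<le> R"
  shows "pearson M (\<lambda>\<omega>. g1 (X \<omega>)) (\<lambda>\<omega>. g2 (Y \<omega>)) \<le> R"
proof -
  have [measurable]: "g1 \<in> borel_measurable borel" "g2 \<in> borel_measurable borel"
    and I1: "integrable M (\<lambda>\<omega>. (g1 (X \<omega>))\<^sup>2)" and I2: "integrable M (\<lambda>\<omega>. (g2 (Y \<omega>))\<^sup>2)"
    and v1: "var M (\<lambda>\<omega>. g1 (X \<omega>)) > 0" and v2: "var M (\<lambda>\<omega>. g2 (Y \<omega>)) > 0"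
    using g1 g2 unfolding L2star_def by auto
  have "covar M (\<lambda>\<omega>. g1 (X \<omega>)) (\<lambda>\<omega>. g2 (Y \<omega>))
      = (\<Sum>n. rho (Suc n) * fourier_coeff f1 (phi (Suc n)) g1 * fourier_coeff f2 (psi (Suc n)) g2)"
    using covariance_series[OF _ _ I1 I2] by (simp add: sums_iff)
  also have "\<dots> \<le> R * sqrt (var M (\<lambda>\<omega>. g1 (X \<omega>)) * var M (\<lambda>\<omega>. g2 (Y \<omega>)))"
    by (rule series_cauchy_schwarz[OF bessel_variance[OF M X_distributed f1 phi _ I1]
          bessel_variance[OF M Y_distributed f2 psi _ I2] v1 v2 R]) simp_all
  finally show ?thesis unfolding pearson_def using v1 v2 by (simp add: divide_le_eq)
qed

text \<open>Lower bound: \<open>\<plusminus>\<phi>_m(X)\<close> and \<open>\<psi>_m(Y)\<close> are standardised with covariance \<open>\<plusminus>\<rho>_m\<close>.\<close>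

lemma pearson_orthonormal_pair:
  assumes m: "m \<noteq> 0" and s: "s * s = 1"
  shows "(\<lambda>x. s * poly (phi m) x) \<in> L2star M X" "(\<lambda>y. poly (psi m) y) \<in> L2star M Y"
    "pearson M (\<lambda>\<omega>. s * poly (phi m) (X \<omega>)) (\<lambda>\<omega>. poly (psi m) (Y \<omega>)) = s * rho m"
proof -
  note U = orthonormal_poly_standardized[OF M X_distributed f1 phi m]
  note V = orthonormal_poly_standardized[OF M Y_distributed f2 psi m]
  have "(\<lambda>n. rho (Suc n) * fourier_coeff f1 (phi (Suc n)) (poly (phi m)) * fourier_coeff f2 (psi (Suc n)) (poly (psi m)))
      = (\<lambda>n. if n = m - 1 then rho m else 0)"
    using m by (auto simp: fun_eq_iff fourier_coeff_of_member[OF phi] fourier_coeff_of_member[OF psi])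
  hence "(\<lambda>n. if n = m - 1 then rho m else 0) sums covar M (\<lambda>\<omega>. poly (phi m) (X \<omega>)) (\<lambda>\<omega>. poly (psi m) (Y \<omega>))"
    using covariance_series[OF _ _ U(1) V(1)] by simp
  hence cov: "covar M (\<lambda>\<omega>. poly (phi m) (X \<omega>)) (\<lambda>\<omega>. poly (psi m) (Y \<omega>)) = rho m"
    using sums_single[of "m - 1" "\<lambda>_. rho m"] sums_unique2 by fastforce
  have var_s: "var M (\<lambda>\<omega>. s * poly (phi m) (X \<omega>)) = 1"
    using covar_affine[OF M U(2) U(2), of s 0 s 0] U(3) s unfolding var_def by simp
  have "integrable M (\<lambda>\<omega>. (s * poly (phi m) (X \<omega>))\<^sup>2)"
    using U(1) by (simp add: power_mult_distrib)
  thus "(\<lambda>x. s * poly (phi m) x) \<in> L2star M X" using var_s unfolding L2star_def by simp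
  show "(\<lambda>y. poly (psi m) y) \<in> L2star M Y" using V unfolding L2star_def by simp
  show "pearson M (\<lambda>\<omega>. s * poly (phi m) (X \<omega>)) (\<lambda>\<omega>. poly (psi m) (Y \<omega>)) = s * rho m"
    using covar_affine[OF M U(2) V(2), of s 0 1 0] cov var_s V(3) unfolding pearson_def by simp
qed

text \<open>Since \<open>\<phi>\<^sub>1, \<psi>\<^sub>1\<close> are increasing affine maps, \<open>\<rho>(X,Y) = \<rho>(\<phi>\<^sub>1(X), \<psi>\<^sub>1(Y)) = \<rho>\<^sub>1\<close>.\<close>

lemma pearson_XY: "pearson M X Y = rho 1"
proof -
  have deg: "degree (phi 1) = 1" "degree (psi 1) = 1"
    using orthonormal_poly_systemD(1)[OF phi] orthonormal_poly_systemD(1)[OF psi] by blast+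
  define c0 c1 where "c0 = coeff (phi 1) 0" and "c1 = coeff (phi 1) 1"
  define d0 d1 where "d0 = coeff (psi 1) 0" and "d1 = coeff (psi 1) 1"
  have pos: "c1 > 0" "d1 > 0"
    using orthonormal_poly_systemD(2)[OF phi, of 1] orthonormal_poly_systemD(2)[OF psi, of 1] deg
    unfolding c0_def c1_def d0_def d1_def by simp_all
  have "(\<lambda>\<omega>. (1 / c1) * poly (phi 1) (X \<omega>) + (- c0 / c1)) = X"
    using pos(1) unfolding degree_one_poly_affine[OF deg(1)] c0_def c1_def by (auto simp: field_simps)
  moreover have "(\<lambda>\<omega>. (1 / d1) * poly (psi 1) (Y \<omega>) + (- d0 / d1)) = Y"
    using pos(2) unfolding degree_one_poly_affine[OF deg(2)] d0_def d1_def by (auto simp: field_simps)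
  ultimately have "pearson M X Y = pearson M (\<lambda>\<omega>. (1 / c1) * poly (phi 1) (X \<omega>) + (- c0 / c1))
      (\<lambda>\<omega>. (1 / d1) * poly (psi 1) (Y \<omega>) + (- d0 / d1))"
    by simp
  also have "\<dots> = pearson M (\<lambda>\<omega>. poly (phi 1) (X \<omega>)) (\<lambda>\<omega>. poly (psi 1) (Y \<omega>))"
    using pos by (intro pearson_affine[OF M] orthonormal_poly_standardized(2)[OF M X_distributed f1 phi]
        orthonormal_poly_standardized(2)[OF M Y_distributed f2 psi]) simp_all
  also have "\<dots> = rho 1" using pearson_orthonormal_pair(3)[of 1 1] by simp
  finally show ?thesis .
qed

text \<open>Each \<open>|\<rho>_n|\<close> is one of the terms of \<open>\<Sum> |\<rho>_n| c_n d_n \<le> 1\<close> (as \<open>c_n, d_n \<ge> 1\<close>).\<close>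

lemma abs_rho_le_1: assumes "n \<ge> 1" shows "\<bar>rho n\<bar> \<le> 1"
proof -
  obtain k where n: "n = Suc k" using assms by (cases n) auto
  have c: "1 \<le> sup_abs_on (phi (Suc k)) a1 b1" "1 \<le> sup_abs_on (psi (Suc k)) a2 b2"
    using orthonormal_poly_sup_ge_1[OF f1 phi] orthonormal_poly_sup_ge_1[OF f2 psi] by blast+
  have "1 \<le> sup_abs_on (phi (Suc k)) a1 b1 * sup_abs_on (psi (Suc k)) a2 b2"
    using c mult_mono[OF c] by simp
  hence "\<bar>rho (Suc k)\<bar> * 1 \<le> term_bound k"
    unfolding term_bound_def mult.assoc by (intro mult_left_mono) auto
  also have "term_bound k \<le> (\<Sum>i<Suc k. term_bound i)"
    by (rule member_le_sum) (auto simp: term_bound_nonneg)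
  also have "\<dots> \<le> 1" by (rule partial_term_bound_le_1)
  finally show ?thesis using n by simp
qed

lemma maxcorr_XY: "maxcorr M X Y = (SUP n\<in>{1..}. \<bar>rho n\<bar>)"
proof -
  define R where "R = (SUP n\<in>{1..}. \<bar>rho n\<bar>)"
  define C where "C = {pearson M (\<lambda>\<omega>. g1 (X \<omega>)) (\<lambda>\<omega>. g2 (Y \<omega>)) | g1 g2.
                         g1 \<in> L2star M X \<and> g2 \<in> L2star M Y}"
  have bdd: "bdd_above ((\<lambda>n. \<bar>rho n\<bar>) ` {1..})" using abs_rho_le_1 by (auto intro!: bdd_aboveI[of _ 1])
  have R: "\<bar>rho (Suc n)\<bar> \<le> R" for n unfolding R_def by (rule cSUP_upper[OF _ bdd]) simp
  have le_R: "c \<le> R" if c: "c \<in> C" for c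
  proof -
    obtain g1 g2 where "c = pearson M (\<lambda>\<omega>. g1 (X \<omega>)) (\<lambda>\<omega>. g2 (Y \<omega>))"
      and "g1 \<in> L2star M X" "g2 \<in> L2star M Y" using c unfolding C_def by blast
    thus ?thesis using pearson_le R by simp
  qed
  have in_C: "s * rho m \<in> C" if "m \<ge> 1" "s * s = 1" for m s
  proof -
    note pair = pearson_orthonormal_pair[of m s]
    show ?thesis unfolding C_def
      by (rule CollectI, rule exI[of _ "\<lambda>x. s * poly (phi m) x"], rule exI[of _ "\<lambda>y. poly (psi m) y"])
         (use pair that in simp)
  qed
  have "C \<noteq> {}" using in_C[of 1 1] by auto
  hence "Sup C \<le> R" by (rule cSup_least) (rule le_R)
  moreover have "R \<le> Sup C" unfolding R_def
  proof (rule cSUP_least)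
    have bddC: "bdd_above C" by (rule bdd_aboveI[where M=R], rule le_R)
    fix n :: nat assume "n \<in> {1..}"
    hence "rho n \<in> C" "- rho n \<in> C" using in_C[of n 1] in_C[of n "-1"] by simp_all
    hence "rho n \<le> Sup C" "- rho n \<le> Sup C" using cSup_upper[OF _ bddC] by blast+
    thus "\<bar>rho n\<bar> \<le> Sup C" by (simp add: abs_le_iff)
  qed simp
  ultimately show ?thesis unfolding maxcorr_def C_def[symmetric] R_def by simp
qed

end

theorem mainTheorem3:
  fixes f1 f2 :: "real \<Rightarrow> real" and \<alpha>1 \<omega>1 \<alpha>2 \<omega>2 :: real
    and \<phi> \<psi> :: "nat \<Rightarrow> real poly" and \<rho> :: "nat \<Rightarrow> real"
    and M :: "'a measure" and X Y :: "'a \<Rightarrow> real"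
  assumes f1: "bounded_support_density f1 \<alpha>1 \<omega>1"
    and f2: "bounded_support_density f2 \<alpha>2 \<omega>2"
    and \<phi>: "orthonormal_poly_system f1 \<phi>"
    and \<psi>: "orthonormal_poly_system f2 \<psi>"
    and summ: "summable (\<lambda>n. \<bar>\<rho> (Suc n)\<bar> * sup_abs_on (\<phi> (Suc n)) \<alpha>1 \<omega>1 * sup_abs_on (\<psi> (Suc n)) \<alpha>2 \<omega>2)"
    and sum_le: "(\<Sum>n. \<bar>\<rho> (Suc n)\<bar> * sup_abs_on (\<phi> (Suc n)) \<alpha>1 \<omega>1 * sup_abs_on (\<psi> (Suc n)) \<alpha>2 \<omega>2) \<le> 1"
    and M: "prob_space M"
    and XY: "distributed M (lborel \<Otimes>\<^sub>M lborel) (\<lambda>\<omega>. (X \<omega>, Y \<omega>))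
               (\<lambda>(x, y). ennreal (lancaster_density f1 f2 \<alpha>1 \<omega>1 \<alpha>2 \<omega>2 \<phi> \<psi> \<rho> x y))"
  shows "pearson M X Y = \<rho> 1 \<and> maxcorr M X Y = (SUP n\<in>{1..}. \<bar>\<rho> n\<bar>)"
proof -
  interpret lancaster_model f1 f2 \<alpha>1 \<omega>1 \<alpha>2 \<omega>2 \<phi> \<psi> \<rho> M X Y
    by (rule lancaster_model.intro) (fact f1 f2 \<phi> \<psi> summ sum_le M XY)+
  show ?thesis using pearson_XY maxcorr_XY by simp
qed

end
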